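(* The big-O problem and the big-$\Theta$ problem for (non-negative) weighted automata are interreducible: each reduces to the other by a computable many-one reduction.
   Context: A (non-negative) weighted automaton is $\langle Q,\Sigma,M,F\rangle$ with finite $Q$, finite alphabet $\Sigma$, $M:\Sigma\to\mathbb{Q}_{\ge0}^{Q\times Q}$ and $F\subseteq Q$; the weight of $w=a_1\cdots a_n$ from $s$ is $\nu_s(w)=\sum_{t\in F}(M(a_1)\cdots M(a_n))_{s,t}$. State $s$ is big-O of $s'$ if there is $C>0$ with $\nu_s(w)\le C\nu_{s'}(w)$ for all $w\in\Sigma^*$; $s$ is big-$\Theta$ of $s'$ if $s$ is big-O of $s'$ and $s'$ is big-O of $s$. The big-O (resp. big-$\Theta$) problem asks, given an automaton and states $s,s'$, whether $s$ is big-O (resp. big-$\Theta$) of $s'$. *)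

theory Defs
  imports Complex_Main "HOL-Library.Nat_Bijection"
begin

datatype recf = Z | S | Proj nat | Comp recf "recf list" | Prim recf recf | Mu recf

inductive rec_eval :: "recf \<Rightarrow> nat list \<Rightarrow> nat \<Rightarrow> bool" where
  zero: "rec_eval Z xs 0"
| succ: "rec_eval S (x # xs) (Suc x)"
| proj: "i < length xs \<Longrightarrow> rec_eval (Proj i) xs (xs ! i)"
| comp: "list_all2 (\<lambda>g z. rec_eval g xs z) gs zs \<Longrightarrow> rec_eval f zs y
         \<Longrightarrow> rec_eval (Comp f gs) xs y"
| prim0: "rec_eval f xs y \<Longrightarrow> rec_eval (Prim f g) (0 # xs) y"
| primS: "rec_eval (Prim f g) (n # xs) z \<Longrightarrow> rec_eval g (n # z # xs) y
         \<Longrightarrow> rec_eval (Prim f g) (Suc n # xs) y"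
| mu: "rec_eval f (n # xs) 0 \<Longrightarrow> (\<forall>k<n. \<exists>v. v > 0 \<and> rec_eval f (k # xs) v)
         \<Longrightarrow> rec_eval (Mu f) xs n"
monos list_all2_mono

definition computable :: "(nat \<Rightarrow> nat) \<Rightarrow> bool" where
  "computable f \<longleftrightarrow> (\<exists>r. \<forall>x. rec_eval r [x] (f x))"

definition many_one_reduces :: "nat set \<Rightarrow> nat set \<Rightarrow> bool" where
  "many_one_reduces A B \<longleftrightarrow> (\<exists>f. computable f \<and> (\<forall>x. x \<in> A \<longleftrightarrow> f x \<in> B))"

text \<open>A non-negative rational is given as (numerator, denominator), denominator > 0.
  An instance: number of states n (states 0..<n), a list of transition matrices
  (one per letter, letters 0..<length), each a list of n rows of n entries,
  the final states (list), and the two states s, s'.\<close>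

record inst =
  nstates :: nat
  mats :: "(nat \<times> nat) list list list"
  finals :: "nat list"
  st1 :: nat
  st2 :: nat

definition wf_inst :: "inst \<Rightarrow> bool" where
  "wf_inst I \<longleftrightarrow> st1 I < nstates I \<and> st2 I < nstates I
     \<and> (\<forall>t\<in>set (finals I). t < nstates I)
     \<and> (\<forall>m\<in>set (mats I). length m = nstates I
          \<and> (\<forall>row\<in>set m. length row = nstates I \<and> (\<forall>e\<in>set row. snd e > 0)))"

definition entry :: "inst \<Rightarrow> nat \<Rightarrow> nat \<Rightarrow> nat \<Rightarrow> rat" where
  "entry I a p q = (let e = mats I ! a ! p ! q in of_nat (fst e) / of_nat (snd e))"

text \<open>nu p w = sum over t in F of (M(a1)...M(an))_{p,t}.\<close>
fun weight :: "inst \<Rightarrow> nat \<Rightarrow> nat list \<Rightarrow> rat" where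
  "weight I p [] = (if p \<in> set (finals I) then 1 else 0)"
| "weight I p (a # w) = (\<Sum>q<nstates I. entry I a p q * weight I q w)"

definition is_word :: "inst \<Rightarrow> nat list \<Rightarrow> bool" where
  "is_word I w \<longleftrightarrow> (\<forall>a\<in>set w. a < length (mats I))"

definition big_O :: "inst \<Rightarrow> nat \<Rightarrow> nat \<Rightarrow> bool" where
  "big_O I s s' \<longleftrightarrow> (\<exists>C::real. C > 0 \<and> (\<forall>w. is_word I w \<longrightarrow> of_rat (weight I s w) \<le> C * of_rat (weight I s' w)))"

definition big_Theta :: "inst \<Rightarrow> nat \<Rightarrow> nat \<Rightarrow> bool" where
  "big_Theta I s s' \<longleftrightarrow> big_O I s s' \<and> big_O I s' s"

definition enc_inst :: "inst \<Rightarrow> nat" where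
  "enc_inst I = list_encode
     [nstates I,
      list_encode (map (\<lambda>m. list_encode (map (\<lambda>row. list_encode (map prod_encode row)) m)) (mats I)),
      list_encode (finals I), st1 I, st2 I]"

definition BigO_problem :: "nat set" where
  "BigO_problem = {enc_inst I | I. wf_inst I \<and> big_O I (st1 I) (st2 I)}"

definition BigTheta_problem :: "nat set" where
  "BigTheta_problem = {enc_inst I | I. wf_inst I \<and> big_Theta I (st1 I) (st2 I)}"

end

theory Submission
  imports Defs
begin

(* Both reductions add two fresh letters and two fresh states n, n + 1 (the new distinguished
   pair) to the automaton; the fresh states have only weight-1 transitions, on the fresh letters,
   into the old states s, s'.  Every word read from a fresh state that is not of the form a w,
   with a fresh letter a and w a word of the old automaton, has weight 0.

   Big-O to big-Theta: the letter a leads n to s and s', and n + 1 to s'.  Then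
   nu_n(a w) = nu_s(w) + nu_s'(w) (just nu_s(w) if s = s') and nu_(n+1)(a w) = nu_s'(w), so n + 1 is
   always big-O of n, and n is big-O of n + 1 iff s is big-O of s'.

   Big-Theta to big-O: the letter a leads n to s and n + 1 to s', the letter b leads n to s' and
   n + 1 to s.  So n is big-O of n + 1 iff s is big-O of s' and s' is big-O of s.

   On codes the construction is assembled from mu-recursive combinators; codes of ill-formed
   instances are sent to a fixed instance that lies in neither problem. *)

section \<open>Mu-recursive functions on argument lists\<close>

definition rec_computable :: "nat \<Rightarrow> (nat list \<Rightarrow> nat) \<Rightarrow> bool" where
  "rec_computable k f \<longleftrightarrow> (\<exists>r. \<forall>xs. length xs = k \<longrightarrow> rec_eval r xs (f xs))"

lemma rec_computable_cong:
  "rec_computable k f \<Longrightarrow> (\<And>xs. length xs = k \<Longrightarrow> f xs = g xs) \<Longrightarrow> rec_computable k g"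
  unfolding rec_computable_def by metis

lemma computable_if_rec_computable:
  assumes "rec_computable (Suc 0) (\<lambda>xs. f (xs ! 0))"
  shows "computable f"
proof -
  obtain r where "\<forall>xs. length xs = Suc 0 \<longrightarrow> rec_eval r xs (f (xs ! 0))"
    using assms unfolding rec_computable_def by blast
  then have "rec_eval r [x] (f x)" for x by (metis length_Cons list.size(3) nth_Cons_0)
  then show ?thesis unfolding computable_def by blast
qed

lemma rec_computable_comp:
  assumes "rec_computable m f" "length gs = m" "\<forall>g\<in>set gs. rec_computable k g"
  shows "rec_computable k (\<lambda>xs. f (map (\<lambda>g. g xs) gs))"
proof -
  let ?computes = "\<lambda>r g. \<forall>xs. length xs = k \<longrightarrow> rec_eval r xs (g xs)"
  have "\<exists>rs. list_all2 ?computes rs gs"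
    using assms(3) unfolding rec_computable_def
    by (induction gs) (auto intro: list_all2_Cons[THEN iffD2])
  then obtain rs where rs: "list_all2 ?computes rs gs" by blast
  obtain rf where rf: "\<forall>zs. length zs = m \<longrightarrow> rec_eval rf zs (f zs)"
    using assms(1) unfolding rec_computable_def by blast
  have "rec_eval (Comp rf rs) xs (f (map (\<lambda>g. g xs) gs))" if "length xs = k" for xs
  proof (rule rec_eval.comp)
    show "list_all2 (\<lambda>r z. rec_eval r xs z) rs (map (\<lambda>g. g xs) gs)"
      using rs that by (auto simp: list_all2_conv_all_nth)
    show "rec_eval rf (map (\<lambda>g. g xs) gs) (f (map (\<lambda>g. g xs) gs))"
      using rf assms(2) by simp
  qed
  then show ?thesis unfolding rec_computable_def by blast
qed

lemma rec_computable_compose1: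
  assumes "rec_computable (Suc 0) (\<lambda>ys. F (ys ! 0))" "rec_computable k f"
  shows "rec_computable k (\<lambda>xs. F (f xs))"
  using rec_computable_comp[OF assms(1), of "[f]" k] assms by simp

lemma rec_computable_compose2:
  assumes "rec_computable (Suc (Suc 0)) (\<lambda>ys. F (ys ! 0) (ys ! 1))"
    and "rec_computable k f" "rec_computable k g"
  shows "rec_computable k (\<lambda>xs. F (f xs) (g xs))"
  using rec_computable_comp[OF assms(1), of "[f, g]" k] assms by simp

primrec prim_rec :: "(nat list \<Rightarrow> nat) \<Rightarrow> (nat list \<Rightarrow> nat) \<Rightarrow> nat \<Rightarrow> nat list \<Rightarrow> nat" where
  "prim_rec f g 0 xs = f xs"
| "prim_rec f g (Suc n) xs = g (n # prim_rec f g n xs # xs)"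

lemma rec_computable_prim_rec:
  assumes "rec_computable k f" "rec_computable (Suc (Suc k)) g"
  shows "rec_computable (Suc k) (\<lambda>ys. prim_rec f g (hd ys) (tl ys))"
proof -
  obtain rf where rf: "\<forall>xs. length xs = k \<longrightarrow> rec_eval rf xs (f xs)"
    using assms(1) unfolding rec_computable_def by blast
  obtain rg where rg: "\<forall>xs. length xs = Suc (Suc k) \<longrightarrow> rec_eval rg xs (g xs)"
    using assms(2) unfolding rec_computable_def by blast
  have "rec_eval (Prim rf rg) (n # xs) (prim_rec f g n xs)" if "length xs = k" for n xs
    by (induction n) (use rf rg that in \<open>auto intro: rec_eval.prim0 rec_eval.primS\<close>)
  then show ?thesis
    unfolding rec_computable_def by (intro exI[of _ "Prim rf rg"]) (auto simp: length_Suc_conv)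
qed

lemma rec_computable_by_prim_rec:
  assumes "rec_computable k f" "rec_computable (Suc (Suc k)) g"
    and "\<And>n xs. length xs = k \<Longrightarrow> prim_rec f g n xs = h (n # xs)"
  shows "rec_computable (Suc k) h"
  using rec_computable_prim_rec[OF assms(1,2)]
  by (rule rec_computable_cong) (auto simp: length_Suc_conv assms(3))

lemma rec_computable_Least:
  assumes "rec_computable (Suc k) f" "\<And>xs. length xs = k \<Longrightarrow> \<exists>n. f (n # xs) = 0"
  shows "rec_computable k (\<lambda>xs. LEAST n. f (n # xs) = 0)"
proof -
  obtain rf where rf: "\<forall>xs. length xs = Suc k \<longrightarrow> rec_eval rf xs (f xs)"
    using assms(1) unfolding rec_computable_def by blast
  have "rec_eval (Mu rf) xs (LEAST n. f (n # xs) = 0)" if len: "length xs = k" for xs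
  proof (rule rec_eval.mu)
    let ?n = "LEAST n. f (n # xs) = 0"
    have "f (?n # xs) = 0" using assms(2)[OF len] by (rule LeastI_ex)
    then show "rec_eval rf (?n # xs) 0" using rf len by (metis length_Cons)
    have "0 < f (j # xs) \<and> rec_eval rf (j # xs) (f (j # xs))" if "j < ?n" for j
      using not_less_Least[OF that] rf len by auto
    then show "\<forall>j<?n. \<exists>v. v > 0 \<and> rec_eval rf (j # xs) v" by blast
  qed
  then show ?thesis unfolding rec_computable_def by blast
qed

lemma rec_computable_nth: "j < k \<Longrightarrow> rec_computable k (\<lambda>xs. xs ! j)"
  unfolding rec_computable_def by (auto intro: rec_eval.proj)

(* The argument shapes produced by nested tabulations (rec_computable_list_encode_map_upt). *)
lemma rec_computable_nth_tl:
  "Suc j < k \<Longrightarrow> rec_computable k (\<lambda>xs. tl xs ! j)"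
  "Suc (Suc j) < k \<Longrightarrow> rec_computable k (\<lambda>xs. tl (tl xs) ! j)"
  "Suc (Suc (Suc j)) < k \<Longrightarrow> rec_computable k (\<lambda>xs. tl (tl (tl xs)) ! j)"
  by (rule rec_computable_cong[OF rec_computable_nth], assumption, simp add: nth_tl)+

lemma rec_computable_Cons_drop:
  assumes "rec_computable (Suc k) G" "rec_computable (m + k) h"
  shows "rec_computable (m + k) (\<lambda>zs. G (h zs # drop m zs))"
proof -
  have drop_eq: "map (nth zs) [m..<m+k] = drop m zs" if "length zs = m + k" for zs :: "nat list"
    using that by (intro nth_equalityI) auto
  have "rec_computable (m + k) (\<lambda>zs. G (map (\<lambda>g. g zs) (h # map (\<lambda>j zs. zs ! j) [m..<m+k])))"
    by (rule rec_computable_comp[OF assms(1)]) (auto intro: assms(2) rec_computable_nth)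
  then show ?thesis by (rule rec_computable_cong) (simp add: drop_eq[symmetric] comp_def)
qed

lemma rec_computable_subst0:
  assumes "rec_computable (Suc k) F" "rec_computable k b"
  shows "rec_computable k (\<lambda>xs. F (b xs # xs))"
  using rec_computable_Cons_drop[of k F 0 b] assms by simp

lemma rec_computable_Suc:
  assumes "rec_computable k f"
  shows "rec_computable k (\<lambda>xs. Suc (f xs))"
proof -
  have "rec_computable (Suc 0) (\<lambda>ys. Suc (ys ! 0))"
    unfolding rec_computable_def
    by (intro exI[of _ S]) (auto simp: length_Suc_conv intro: rec_eval.succ)
  then show ?thesis using assms by (rule rec_computable_compose1)
qed

lemma rec_computable_const: "rec_computable k (\<lambda>xs. c)"
proof (induction c)
  case 0
  show ?case unfolding rec_computable_def by (auto intro: rec_eval.zero)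
next
  case (Suc c)
  then show ?case by (rule rec_computable_Suc)
qed

lemma rec_computable_add:
  assumes "rec_computable k f" "rec_computable k g"
  shows "rec_computable k (\<lambda>xs. f xs + g xs)"
proof -
  have "rec_computable (Suc (Suc 0)) (\<lambda>ys. ys ! 0 + ys ! 1)"
  proof (rule rec_computable_by_prim_rec)
    show "rec_computable (Suc 0) (\<lambda>xs. xs ! 0)" by (rule rec_computable_nth) simp
    show "rec_computable (Suc (Suc (Suc 0))) (\<lambda>zs. Suc (zs ! 1))"
      by (intro rec_computable_Suc rec_computable_nth) simp
    show "prim_rec (\<lambda>xs. xs ! 0) (\<lambda>zs. Suc (zs ! 1)) n xs = (n # xs) ! 0 + (n # xs) ! 1" for n xs
      by (induction n) auto
  qed
  then show ?thesis using assms by (rule rec_computable_compose2)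
qed

lemma rec_computable_mult:
  assumes "rec_computable k f" "rec_computable k g"
  shows "rec_computable k (\<lambda>xs. f xs * g xs)"
proof -
  have "rec_computable (Suc (Suc 0)) (\<lambda>ys. ys ! 0 * ys ! 1)"
  proof (rule rec_computable_by_prim_rec)
    show "rec_computable (Suc 0) (\<lambda>xs. 0)" by (rule rec_computable_const)
    show "rec_computable (Suc (Suc (Suc 0))) (\<lambda>zs. zs ! 1 + zs ! 2)"
      by (intro rec_computable_add rec_computable_nth) simp_all
    show "prim_rec (\<lambda>xs. 0) (\<lambda>zs. zs ! 1 + zs ! 2) n xs = (n # xs) ! 0 * (n # xs) ! 1" for n xs
      by (induction n) auto
  qed
  then show ?thesis using assms by (rule rec_computable_compose2)
qed

lemma rec_computable_diff:
  assumes "rec_computable k f" "rec_computable k g"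
  shows "rec_computable k (\<lambda>xs. f xs - g xs)"
proof -
  have pred: "rec_computable (Suc 0) (\<lambda>ys. ys ! 0 - 1)"
  proof (rule rec_computable_by_prim_rec)
    show "rec_computable 0 (\<lambda>xs. 0)" by (rule rec_computable_const)
    show "rec_computable (Suc (Suc 0)) (\<lambda>zs. zs ! 0)" by (rule rec_computable_nth) simp
    show "prim_rec (\<lambda>xs. 0) (\<lambda>zs. zs ! 0) n xs = (n # xs) ! 0 - 1" for n xs
      by (induction n) auto
  qed
  have "rec_computable (Suc (Suc 0)) (\<lambda>ys. ys ! 1 - ys ! 0)"
  proof (rule rec_computable_by_prim_rec)
    show "rec_computable (Suc 0) (\<lambda>xs. xs ! 0)" by (rule rec_computable_nth) simp
    show "rec_computable (Suc (Suc (Suc 0))) (\<lambda>zs. zs ! 1 - 1)"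
      by (intro rec_computable_compose1[OF pred] rec_computable_nth) simp
    show "prim_rec (\<lambda>xs. xs ! 0) (\<lambda>zs. zs ! 1 - 1) n xs = (n # xs) ! 1 - (n # xs) ! 0" for n xs
      by (induction n) auto
  qed
  then show ?thesis using rec_computable_compose2[of "\<lambda>x y. y - x" k g f] assms by simp
qed

lemma rec_computable_triangle:
  assumes "rec_computable k f"
  shows "rec_computable k (\<lambda>xs. triangle (f xs))"
proof -
  have "rec_computable (Suc 0) (\<lambda>ys. triangle (ys ! 0))"
  proof (rule rec_computable_by_prim_rec)
    show "rec_computable 0 (\<lambda>xs. 0)" by (rule rec_computable_const)
    show "rec_computable (Suc (Suc 0)) (\<lambda>zs. zs ! 1 + Suc (zs ! 0))"
      by (intro rec_computable_add rec_computable_Suc rec_computable_nth) simp_all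
    show "prim_rec (\<lambda>xs. 0) (\<lambda>zs. zs ! 1 + Suc (zs ! 0)) n xs = triangle ((n # xs) ! 0)" for n xs
      by (induction n) auto
  qed
  then show ?thesis using assms by (rule rec_computable_compose1)
qed

lemma rec_computable_prod_encode:
  "rec_computable k f \<Longrightarrow> rec_computable k g \<Longrightarrow> rec_computable k (\<lambda>xs. prod_encode (f xs, g xs))"
  unfolding prod_encode_def by (auto intro!: rec_computable_add rec_computable_triangle)

lemma rec_computable_list_encode_Cons:
  "rec_computable k f \<Longrightarrow> rec_computable k (\<lambda>xs. list_encode (g xs)) \<Longrightarrow>
    rec_computable k (\<lambda>xs. list_encode (f xs # g xs))"
  by (simp add: rec_computable_Suc rec_computable_prod_encode)

definition rec_decidable :: "nat \<Rightarrow> (nat list \<Rightarrow> bool) \<Rightarrow> bool" where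
  "rec_decidable k P \<longleftrightarrow> rec_computable k (\<lambda>xs. if P xs then 1 else 0)"

lemma rec_decidable_less:
  "rec_computable k f \<Longrightarrow> rec_computable k g \<Longrightarrow> rec_decidable k (\<lambda>xs. f xs < g xs)"
  unfolding rec_decidable_def
  by (rule rec_computable_cong[of k "\<lambda>xs. 1 - (1 - (g xs - f xs))"])
    (auto intro!: rec_computable_diff rec_computable_const)

lemma rec_decidable_eq:
  "rec_computable k f \<Longrightarrow> rec_computable k g \<Longrightarrow> rec_decidable k (\<lambda>xs. f xs = g xs)"
  unfolding rec_decidable_def
  by (rule rec_computable_cong[of k "\<lambda>xs. (1 - (f xs - g xs)) * (1 - (g xs - f xs))"])
    (auto intro!: rec_computable_diff rec_computable_mult rec_computable_const)

lemma rec_decidable_conj: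
  "rec_decidable k P \<Longrightarrow> rec_decidable k Q \<Longrightarrow> rec_decidable k (\<lambda>xs. P xs \<and> Q xs)"
  unfolding rec_decidable_def
  by (rule rec_computable_cong[of k "\<lambda>xs. (if P xs then 1 else 0) * (if Q xs then 1 else 0)"])
    (auto intro!: rec_computable_mult)

lemma rec_decidable_not: "rec_decidable k P \<Longrightarrow> rec_decidable k (\<lambda>xs. \<not> P xs)"
  unfolding rec_decidable_def
  by (rule rec_computable_cong[of k "\<lambda>xs. 1 - (if P xs then 1 else 0)"])
    (auto intro!: rec_computable_diff rec_computable_const)

lemma rec_decidable_disj:
  "rec_decidable k P \<Longrightarrow> rec_decidable k Q \<Longrightarrow> rec_decidable k (\<lambda>xs. P xs \<or> Q xs)"
  using rec_decidable_not[OF rec_decidable_conj[OF rec_decidable_not rec_decidable_not], of k P Q]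
  by simp

lemma rec_computable_If:
  "rec_decidable k P \<Longrightarrow> rec_computable k f \<Longrightarrow> rec_computable k g \<Longrightarrow>
    rec_computable k (\<lambda>xs. if P xs then f xs else g xs)"
  unfolding rec_decidable_def
  by (rule rec_computable_cong[of k
        "\<lambda>xs. (if P xs then 1 else 0) * f xs + (1 - (if P xs then 1 else 0)) * g xs"])
    (auto intro!: rec_computable_mult rec_computable_add rec_computable_diff rec_computable_const)

lemma rec_decidable_comp:
  assumes "rec_decidable m P" "length gs = m" "\<forall>g\<in>set gs. rec_computable k g"
  shows "rec_decidable k (\<lambda>xs. P (map (\<lambda>g. g xs) gs))"
  using rec_computable_comp[of m "\<lambda>ys. if P ys then 1 else 0"] assms
  unfolding rec_decidable_def by blast

lemma rec_decidable_ball: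
  assumes "rec_decidable (Suc k) (\<lambda>ys. Q (ys ! 0) (tl ys))" "rec_computable k b"
  shows "rec_decidable k (\<lambda>xs. \<forall>i<b xs. Q i xs)"
proof -
  define test where "test = (\<lambda>ys. if Q (ys ! 0) (tl ys) then 1 else (0::nat))"
  define step where "step = (\<lambda>zs. zs ! 1 * test (zs ! 0 # drop 2 zs))"
  have "rec_computable (2 + k) (\<lambda>zs. test (zs ! 0 # drop 2 zs))"
    by (rule rec_computable_Cons_drop)
      (use assms(1) in \<open>auto simp: rec_decidable_def test_def intro: rec_computable_nth\<close>)
  then have "rec_computable (Suc (Suc k)) step"
    unfolding step_def by (intro rec_computable_mult rec_computable_nth) auto
  then have "rec_computable (Suc k) (\<lambda>ys. prim_rec (\<lambda>xs. 1) step (hd ys) (tl ys))"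
    by (intro rec_computable_prim_rec rec_computable_const)
  then have "rec_computable k (\<lambda>xs. prim_rec (\<lambda>xs. 1) step (b xs) xs)"
    using rec_computable_subst0[OF _ assms(2)] by fastforce
  moreover have "prim_rec (\<lambda>xs. 1) step n xs = (if \<forall>i<n. Q i xs then 1 else 0)" for n xs
    by (induction n) (auto simp: step_def test_def less_Suc_eq)
  ultimately show ?thesis unfolding rec_decidable_def by simp
qed

lemma rec_computable_list_encode_map_upt:
  assumes "rec_computable (Suc k) (\<lambda>ys. g (ys ! 0) (tl ys))" "rec_computable k b"
  shows "rec_computable k (\<lambda>xs. list_encode (map (\<lambda>i. g i xs) [0..<b xs]))"
proof -
  define G where "G = (\<lambda>ys. g (ys ! 0) (tl ys))"
  define step where
    "step = (\<lambda>zs. Suc (prod_encode (G ((zs ! 2 - Suc (zs ! 0)) # drop 3 zs), zs ! 1)))"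
  have "rec_computable (3 + k) (\<lambda>zs. G ((zs ! 2 - Suc (zs ! 0)) # drop 3 zs))"
    by (rule rec_computable_Cons_drop)
      (use assms(1) in \<open>auto simp: G_def intro!: rec_computable_diff rec_computable_Suc rec_computable_nth\<close>)
  then have "rec_computable (Suc (Suc (Suc k))) step"
    unfolding step_def numeral_3_eq_3
    by (intro rec_computable_Suc rec_computable_prod_encode rec_computable_nth) auto
  then have "rec_computable (Suc (Suc k)) (\<lambda>ys. prim_rec (\<lambda>xs. 0) step (hd ys) (tl ys))"
    by (intro rec_computable_prim_rec rec_computable_const)
  from rec_computable_subst0[OF this rec_computable_nth[of 0 "Suc k"]]
  have "rec_computable (Suc k) (\<lambda>ys. prim_rec (\<lambda>xs. 0) step (ys ! 0) ys)" by simp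
  then have "rec_computable k (\<lambda>xs. prim_rec (\<lambda>xs. 0) step (b xs) (b xs # xs))"
    using rec_computable_subst0[OF _ assms(2)] by fastforce
  moreover have "prim_rec (\<lambda>xs. 0) step j (m # xs) = list_encode (map (\<lambda>i. g i xs) [m - j..<m])"
    if "j \<le> m" for j m xs
    using that
  proof (induction j)
    case (Suc j)
    then have "[m - Suc j..<m] = (m - Suc j) # [m - j..<m]"
      by (simp add: upt_conv_Cons Suc_diff_Suc)
    with Suc show ?case by (simp add: step_def G_def Suc_diff_Suc)
  qed simp
  ultimately show ?thesis by simp
qed

lemma less_triangle_Suc: "z < triangle (Suc z)"
  by (induction z) auto

lemma prod_decode_eq_triangle_Least:
  "prod_decode z =
    (z - triangle (LEAST k. z < triangle (Suc k)),
     (LEAST k. z < triangle (Suc k)) - (z - triangle (LEAST k. z < triangle (Suc k))))"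
proof -
  define K where "K = (LEAST k. z < triangle (Suc k))"
  have upper: "z < triangle (Suc K)" unfolding K_def by (rule LeastI[of _ z]) (rule less_triangle_Suc)
  have lower: "triangle K \<le> z"
  proof (cases K)
    case (Suc K')
    then have "\<not> z < triangle (Suc K')" unfolding K_def by (metis lessI not_less_Least)
    then show ?thesis using Suc by simp
  qed simp
  have "prod_encode (z - triangle K, K - (z - triangle K)) = z"
    using upper lower by (simp add: prod_encode_def)
  then show ?thesis unfolding K_def[symmetric] by (metis prod_encode_inverse)
qed

lemma rec_computable_triangle_Least:
  "rec_computable (Suc 0) (\<lambda>ys. LEAST k. ys ! 0 < triangle (Suc k))"
proof -
  let ?test = "\<lambda>ys. if ys ! 1 < triangle (Suc (ys ! 0)) then 0 else Suc 0"
  have "rec_computable (Suc 0) (\<lambda>xs. LEAST n. ?test (n # xs) = 0)"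
  proof (rule rec_computable_Least)
    show "rec_computable (Suc (Suc 0)) ?test"
      by (intro rec_computable_If rec_decidable_less rec_computable_triangle rec_computable_Suc
          rec_computable_nth rec_computable_const) simp_all
    show "\<exists>n. ?test (n # xs) = 0" for xs
      using less_triangle_Suc[of "xs ! 0"] by (intro exI[of _ "xs ! 0"]) simp
  qed
  moreover have "(if P then 0 else Suc 0) = (0::nat) \<longleftrightarrow> P" for P by simp
  ultimately show ?thesis by (simp del: triangle_Suc)
qed

lemma rec_computable_fst_prod_decode:
  assumes "rec_computable k f"
  shows "rec_computable k (\<lambda>xs. fst (prod_decode (f xs)))"
proof -
  have "rec_computable (Suc 0) (\<lambda>ys. ys ! 0 - triangle (LEAST k. ys ! 0 < triangle (Suc k)))"
    by (intro rec_computable_diff rec_computable_triangle rec_computable_triangle_Least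
        rec_computable_nth) simp
  then have "rec_computable (Suc 0) (\<lambda>ys. fst (prod_decode (ys ! 0)))"
    by (simp add: prod_decode_eq_triangle_Least)
  then show ?thesis using assms by (rule rec_computable_compose1)
qed

lemma rec_computable_snd_prod_decode:
  assumes "rec_computable k f"
  shows "rec_computable k (\<lambda>xs. snd (prod_decode (f xs)))"
proof -
  have "rec_computable (Suc 0) (\<lambda>ys. (LEAST k. ys ! 0 < triangle (Suc k))
      - (ys ! 0 - triangle (LEAST k. ys ! 0 < triangle (Suc k))))"
    by (intro rec_computable_diff rec_computable_triangle rec_computable_triangle_Least
        rec_computable_nth) simp
  then have "rec_computable (Suc 0) (\<lambda>ys. snd (prod_decode (ys ! 0)))"
    by (simp add: prod_decode_eq_triangle_Least)
  then show ?thesis using assms by (rule rec_computable_compose1)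
qed

definition tl_code :: "nat \<Rightarrow> nat" where
  "tl_code c = snd (prod_decode (c - 1))"

text \<open>Unlike \<open>list_decode c ! i\<close>, this is specified (as 0) for \<open>i\<close> out of range,
  which makes it computable on all codes.\<close>
definition nth_code :: "nat \<Rightarrow> nat \<Rightarrow> nat" where
  "nth_code i c = fst (prod_decode ((tl_code ^^ i) c - 1))"

definition length_code :: "nat \<Rightarrow> nat" where
  "length_code c = length (list_decode c)"

lemma tl_code_list_encode: "tl_code (list_encode xs) = list_encode (tl xs)"
proof (cases xs)
  case Nil
  have "prod_decode 0 = (0, 0)"
    using prod_encode_inverse[of "(0, 0)"] by (simp add: prod_encode_def)
  then show ?thesis using Nil by (simp add: tl_code_def)
qed (simp add: tl_code_def)

lemma funpow_tl_code_list_encode: "(tl_code ^^ i) (list_encode xs) = list_encode (drop i xs)"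
  by (induction i arbitrary: xs) (auto simp: tl_code_list_encode drop_Suc tl_drop)

lemma nth_code_list_encode [simp]: "i < length xs \<Longrightarrow> nth_code i (list_encode xs) = xs ! i"
  by (simp add: nth_code_def funpow_tl_code_list_encode Cons_nth_drop_Suc[symmetric])

lemma length_code_list_encode [simp]: "length_code (list_encode xs) = length xs"
  by (simp add: length_code_def)

lemma length_code_eq_Least: "length_code c = (LEAST i. (tl_code ^^ i) c = 0)"
proof -
  obtain xs where c: "c = list_encode xs" by (metis list_decode_inverse)
  have "(tl_code ^^ i) c = 0 \<longleftrightarrow> length xs \<le> i" for i
    using list_encode_eq[of "drop i xs" "[]"] by (simp add: c funpow_tl_code_list_encode)
  then have "(LEAST i. (tl_code ^^ i) c = 0) = (LEAST i. length xs \<le> i)" by simp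
  also have "\<dots> = length xs" by (rule Least_equality) auto
  finally show ?thesis by (simp add: c)
qed

lemma rec_computable_funpow_tl_code:
  "rec_computable (Suc (Suc 0)) (\<lambda>ys. (tl_code ^^ (ys ! 0)) (ys ! 1))"
proof (rule rec_computable_by_prim_rec)
  show "rec_computable (Suc 0) (\<lambda>xs. xs ! 0)" by (rule rec_computable_nth) simp
  show "rec_computable (Suc (Suc (Suc 0))) (\<lambda>zs. tl_code (zs ! 1))"
    unfolding tl_code_def
    by (intro rec_computable_snd_prod_decode rec_computable_diff rec_computable_nth
        rec_computable_const) simp
  show "prim_rec (\<lambda>xs. xs ! 0) (\<lambda>zs. tl_code (zs ! 1)) n xs
      = (tl_code ^^ ((n # xs) ! 0)) ((n # xs) ! 1)" for n xs
    by (induction n) auto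
qed

lemma rec_computable_nth_code:
  assumes "rec_computable k f" "rec_computable k g"
  shows "rec_computable k (\<lambda>xs. nth_code (f xs) (g xs))"
  unfolding nth_code_def
  by (intro rec_computable_fst_prod_decode rec_computable_diff rec_computable_const
      rec_computable_compose2[OF rec_computable_funpow_tl_code] assms)

lemma rec_computable_length_code:
  assumes "rec_computable k f"
  shows "rec_computable k (\<lambda>xs. length_code (f xs))"
proof -
  have "rec_computable (Suc 0)
      (\<lambda>xs. LEAST n. (\<lambda>ys. (tl_code ^^ (ys ! 0)) (ys ! 1)) (n # xs) = 0)"
  proof (rule rec_computable_Least[OF rec_computable_funpow_tl_code])
    fix xs :: "nat list"
    obtain l where "xs ! 0 = list_encode l" by (metis list_decode_inverse)
    then show "\<exists>n. (\<lambda>ys. (tl_code ^^ (ys ! 0)) (ys ! 1)) (n # xs) = 0"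
      by (intro exI[of _ "length l"]) (simp add: funpow_tl_code_list_encode)
  qed
  then have "rec_computable (Suc 0) (\<lambda>ys. length_code (ys ! 0))"
    by (simp add: length_code_eq_Least)
  then show ?thesis using assms by (rule rec_computable_compose1)
qed

lemmas rec_computable_intros =
  rec_computable_const rec_computable_nth rec_computable_nth_tl rec_computable_Suc
  rec_computable_add rec_computable_mult rec_computable_diff rec_computable_If
  rec_computable_prod_encode rec_computable_list_encode_Cons rec_computable_list_encode_map_upt
  rec_computable_snd_prod_decode rec_computable_nth_code rec_computable_length_code
  rec_decidable_less rec_decidable_eq rec_decidable_conj rec_decidable_disj rec_decidable_not
  rec_decidable_ball

section \<open>Extending an automaton by a gadget\<close>

lemma wf_inst_mats:
  assumes "wf_inst I" "a < length (mats I)" "r < nstates I" "c < nstates I"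
  shows "length (mats I ! a) = nstates I" "length (mats I ! a ! r) = nstates I"
    and "0 < snd (mats I ! a ! r ! c)"
proof -
  have matrix: "mats I ! a \<in> set (mats I)" using assms(2) by simp
  with assms(1) show rows: "length (mats I ! a) = nstates I" by (simp add: wf_inst_def)
  with assms(3) have row: "mats I ! a ! r \<in> set (mats I ! a)" by simp
  with matrix assms(1) show cols: "length (mats I ! a ! r) = nstates I"
    by (simp add: wf_inst_def)
  with assms(4) have "mats I ! a ! r ! c \<in> set (mats I ! a ! r)" by simp
  with matrix row assms(1) show "0 < snd (mats I ! a ! r ! c)" by (simp add: wf_inst_def)
qed

text \<open>A gadget, given the number of letters \<open>L\<close>, the number of states \<open>n\<close> and the two
  distinguished states \<open>s, s'\<close>, yields the weight-1 transitions \<open>(a, r, c)\<close> (letter, source,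
  target) that are added to the automaton, which receives the fresh letters \<open>L, L + 1\<close> and the
  fresh states \<open>n, n + 1\<close>.\<close>
type_synonym gadget = "nat \<Rightarrow> nat \<Rightarrow> nat \<Rightarrow> nat \<Rightarrow> (nat \<times> nat \<times> nat) set"

definition gadget_succ :: "gadget \<Rightarrow> inst \<Rightarrow> nat \<Rightarrow> nat \<Rightarrow> nat set" where
  "gadget_succ G I a r = {c. (a, r, c) \<in> G (length (mats I)) (nstates I) (st1 I) (st2 I)}"

definition extend_inst :: "gadget \<Rightarrow> inst \<Rightarrow> inst" where
  "extend_inst G I = \<lparr>nstates = Suc (Suc (nstates I)),
     mats = map (\<lambda>a. map (\<lambda>r. map (\<lambda>c.
         if a < length (mats I) \<and> r < nstates I \<and> c < nstates I then mats I ! a ! r ! c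
         else if c \<in> gadget_succ G I a r then (1, 1) else (0, 1))
       [0..<Suc (Suc (nstates I))]) [0..<Suc (Suc (nstates I))]) [0..<Suc (Suc (length (mats I)))],
     finals = finals I, st1 = nstates I, st2 = Suc (nstates I)\<rparr>"

lemma extend_inst_simps [simp]:
  "nstates (extend_inst G I) = Suc (Suc (nstates I))"
  "length (mats (extend_inst G I)) = Suc (Suc (length (mats I)))"
  "finals (extend_inst G I) = finals I"
  "st1 (extend_inst G I) = nstates I"
  "st2 (extend_inst G I) = Suc (nstates I)"
  by (simp_all add: extend_inst_def)

lemma wf_extend_inst: "wf_inst I \<Longrightarrow> wf_inst (extend_inst G I)"
  using wf_inst_mats(3) by (auto simp: wf_inst_def extend_inst_def)

lemma entry_extend_inst:
  assumes "a < Suc (Suc (length (mats I)))" "p < Suc (Suc (nstates I))" "q < Suc (Suc (nstates I))"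
  shows "entry (extend_inst G I) a p q =
    (if a < length (mats I) \<and> p < nstates I \<and> q < nstates I then entry I a p q
     else if q \<in> gadget_succ G I a p then 1 else 0)"
  using assms unfolding entry_def extend_inst_def Let_def
  by (simp only: inst.select_convs nth_map length_map length_upt) (simp del: upt_Suc)

lemma weight_nonneg: "0 \<le> weight I p w"
  by (induction w arbitrary: p) (auto simp: entry_def Let_def intro!: sum_nonneg mult_nonneg_nonneg)

lemma of_rat_weight_le_sum:
  "q \<in> Q \<Longrightarrow> finite Q \<Longrightarrow> of_rat (weight I q w) \<le> (\<Sum>p\<in>Q. of_rat (weight I p w) :: real)"
  by (intro member_le_sum) (simp_all add: weight_nonneg)

lemma is_word_Cons: "is_word I (a # w) \<longleftrightarrow> a < length (mats I) \<and> is_word I w"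
  by (simp add: is_word_def)

definition gadget_fits :: "gadget \<Rightarrow> inst \<Rightarrow> bool" where
  "gadget_fits G I \<longleftrightarrow> (\<forall>a r c. c \<in> gadget_succ G I a r \<longrightarrow>
     a < Suc (Suc (length (mats I))) \<and> nstates I \<le> r \<and> c < nstates I)"

definition gadget_weight :: "gadget \<Rightarrow> inst \<Rightarrow> nat \<Rightarrow> nat \<Rightarrow> nat list \<Rightarrow> real" where
  "gadget_weight G I a r w = (\<Sum>q\<in>gadget_succ G I a r. of_rat (weight I q w))"

lemma weight_extend_inst_old:
  assumes "gadget_fits G I" "q < nstates I" "is_word (extend_inst G I) w"
  shows "weight (extend_inst G I) q w = (if is_word I w then weight I q w else 0)"
  using assms(2,3)
proof (induction w arbitrary: q)
  case (Cons a w)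
  let ?J = "extend_inst G I" and ?n = "nstates I"
  have a: "a < Suc (Suc (length (mats I)))" and w: "is_word ?J w"
    using Cons.prems(2) by (simp_all add: is_word_Cons)
  have no_succ: "p \<notin> gadget_succ G I a q" for p
    using assms(1) Cons.prems(1) unfolding gadget_fits_def by (meson not_le)
  have "weight ?J q (a # w) = (\<Sum>p<Suc (Suc ?n). entry ?J a q p * weight ?J p w)" by simp
  also have "\<dots> = (\<Sum>p<?n. entry ?J a q p * weight ?J p w)"
    using a Cons.prems(1) by (simp add: entry_extend_inst no_succ)
  also have "\<dots> = (\<Sum>p<?n. (if a < length (mats I) then entry I a q p else 0)
                           * (if is_word I w then weight I p w else 0))"
    using a Cons.prems(1) by (intro sum.cong) (simp_all add: entry_extend_inst no_succ Cons.IH[OF _ w])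
  also have "\<dots> = (if is_word I (a # w) then weight I q (a # w) else 0)"
    by (auto simp: is_word_Cons)
  finally show ?case .
qed (simp add: is_word_def)

lemma weight_extend_inst_new_Nil:
  "wf_inst I \<Longrightarrow> nstates I \<le> r \<Longrightarrow> weight (extend_inst G I) r [] = 0"
  by (auto simp: wf_inst_def)

lemma weight_extend_inst_new_Cons:
  assumes "gadget_fits G I" "nstates I \<le> r" "r < Suc (Suc (nstates I))"
    and "is_word (extend_inst G I) (a # w)"
  shows "of_rat (weight (extend_inst G I) r (a # w)) =
    (if is_word I w then gadget_weight G I a r w else 0)"
proof -
  let ?J = "extend_inst G I" and ?n = "nstates I"
  have a: "a < Suc (Suc (length (mats I)))" and w: "is_word ?J w"
    using assms(4) by (simp_all add: is_word_Cons)
  have succ: "gadget_succ G I a r \<subseteq> {..<?n}" using assms(1) by (auto simp: gadget_fits_def)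
  have "weight ?J r (a # w) = (\<Sum>q<Suc (Suc ?n). entry ?J a r q * weight ?J q w)" by simp
  also have "\<dots> = (\<Sum>q<Suc (Suc ?n). if q \<in> gadget_succ G I a r then weight ?J q w else 0)"
    using a assms(2,3) by (intro sum.cong) (simp_all add: entry_extend_inst)
  also have "\<dots> = (\<Sum>q\<in>gadget_succ G I a r. weight ?J q w)"
    using succ by (intro sum.mono_neutral_cong_right) auto
  also have "\<dots> = (\<Sum>q\<in>gadget_succ G I a r. if is_word I w then weight I q w else 0)"
    using succ by (intro sum.cong) (auto simp: weight_extend_inst_old[OF assms(1) _ w])
  finally show ?thesis by (simp add: gadget_weight_def of_rat_sum)
qed

definition gadget_weight_big_O :: "gadget \<Rightarrow> inst \<Rightarrow> nat \<Rightarrow> nat \<Rightarrow> bool" where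
  "gadget_weight_big_O G I r r' \<longleftrightarrow>
    (\<exists>C>0. \<forall>a w. is_word I w \<longrightarrow> gadget_weight G I a r w \<le> C * gadget_weight G I a r' w)"

lemma gadget_weight_big_O_if_big_O_extend_inst:
  assumes "gadget_fits G I" "big_O (extend_inst G I) r r'"
    and "nstates I \<le> r" "r < Suc (Suc (nstates I))" "nstates I \<le> r'" "r' < Suc (Suc (nstates I))"
  shows "gadget_weight_big_O G I r r'"
proof -
  obtain C :: real where C: "C > 0" and bound: "\<And>w. is_word (extend_inst G I) w \<Longrightarrow>
      of_rat (weight (extend_inst G I) r w) \<le> C * of_rat (weight (extend_inst G I) r' w)"
    using assms(2) unfolding big_O_def by blast
  have "gadget_weight G I a r w \<le> C * gadget_weight G I a r' w" if "is_word I w" for a w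
  proof (cases "a < Suc (Suc (length (mats I)))")
    case True
    with that have "is_word (extend_inst G I) (a # w)" by (auto simp: is_word_def)
    with bound[OF this] that show ?thesis
      using assms(1,3-) by (simp add: weight_extend_inst_new_Cons del: weight.simps)
  next
    case False
    with assms(1) have "gadget_succ G I a p = {}" for p by (auto simp: gadget_fits_def)
    then show ?thesis by (simp add: gadget_weight_def)
  qed
  with C show ?thesis unfolding gadget_weight_big_O_def by blast
qed

lemma big_O_extend_inst_if_gadget_weight_big_O:
  assumes "wf_inst I" "gadget_fits G I" "gadget_weight_big_O G I r r'"
    and "nstates I \<le> r" "r < Suc (Suc (nstates I))" "nstates I \<le> r'" "r' < Suc (Suc (nstates I))"
  shows "big_O (extend_inst G I) r r'"
proof -
  obtain C where C: "C > 0"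
    and bound: "\<And>a w. is_word I w \<Longrightarrow> gadget_weight G I a r w \<le> C * gadget_weight G I a r' w"
    using assms(3) unfolding gadget_weight_big_O_def by blast
  have "of_rat (weight (extend_inst G I) r w') \<le> C * of_rat (weight (extend_inst G I) r' w')"
    if "is_word (extend_inst G I) w'" for w'
  proof (cases w')
    case Nil
    then show ?thesis
      using weight_extend_inst_new_Nil[OF assms(1,4)] weight_extend_inst_new_Nil[OF assms(1,6)]
      by (simp del: weight.simps)
  next
    case (Cons a w)
    with that show ?thesis
      using assms(2,4-) bound by (simp add: weight_extend_inst_new_Cons del: weight.simps)
  qed
  with C show ?thesis unfolding big_O_def by blast
qed

lemma big_O_extend_inst_iff:
  assumes "wf_inst I" "gadget_fits G I"
    and "r \<in> {nstates I, Suc (nstates I)}" "r' \<in> {nstates I, Suc (nstates I)}"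
  shows "big_O (extend_inst G I) r r' \<longleftrightarrow> gadget_weight_big_O G I r r'"
  using assms gadget_weight_big_O_if_big_O_extend_inst big_O_extend_inst_if_gadget_weight_big_O
  by auto

section \<open>Computing the extension on codes\<close>

definition decode_inst :: "nat \<Rightarrow> inst" where
  "decode_inst x = \<lparr>nstates = nth_code 0 x,
     mats = map (\<lambda>m. map (\<lambda>row. map prod_decode (list_decode row)) (list_decode m))
              (list_decode (nth_code 1 x)),
     finals = list_decode (nth_code 2 x), st1 = nth_code 3 x, st2 = nth_code 4 x\<rparr>"

lemma decode_enc_inst [simp]: "decode_inst (enc_inst I) = I"
  by (cases I) (simp add: decode_inst_def enc_inst_def comp_def map_idI del: list_encode.simps)

lemma enc_inst_inject: "enc_inst I = enc_inst J \<longleftrightarrow> I = J"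
  by (metis decode_enc_inst)

lemma length_code_enc_inst: "length_code (enc_inst I) = 5"
  by (simp add: enc_inst_def del: list_encode.simps)

lemma nth_code_enc_inst:
  "nth_code 0 (enc_inst I) = nstates I"
  "nth_code (Suc 0) (enc_inst I) = list_encode
     (map (\<lambda>m. list_encode (map (\<lambda>row. list_encode (map prod_encode row)) m)) (mats I))"
  "nth_code 2 (enc_inst I) = list_encode (finals I)"
  "nth_code 3 (enc_inst I) = st1 I"
  "nth_code 4 (enc_inst I) = st2 I"
  by (simp_all add: enc_inst_def del: list_encode.simps)

lemma enc_decode_inst:
  assumes "length_code x = 5"
  shows "enc_inst (decode_inst x) = x"
proof -
  obtain l where x: "x = list_encode l" by (metis list_decode_inverse)
  with assms obtain a b c d e where "l = [a, b, c, d, e]"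
    by (auto simp: length_Suc_conv numeral_eq_Suc)
  then show ?thesis
    by (simp add: x decode_inst_def enc_inst_def comp_def map_idI del: list_encode.simps)
qed

definition wf_code :: "nat \<Rightarrow> bool" where
  "wf_code x \<longleftrightarrow> length_code x = 5 \<and> nth_code 3 x < nth_code 0 x \<and> nth_code 4 x < nth_code 0 x
     \<and> (\<forall>t<length_code (nth_code 2 x). nth_code t (nth_code 2 x) < nth_code 0 x)
     \<and> (\<forall>a<length_code (nth_code 1 x). length_code (nth_code a (nth_code 1 x)) = nth_code 0 x
       \<and> (\<forall>r<length_code (nth_code a (nth_code 1 x)).
            length_code (nth_code r (nth_code a (nth_code 1 x))) = nth_code 0 x
          \<and> (\<forall>c<length_code (nth_code r (nth_code a (nth_code 1 x))).
               0 < snd (prod_decode (nth_code c (nth_code r (nth_code a (nth_code 1 x))))))))"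

lemma wf_code_enc_inst: "wf_code (enc_inst I) \<longleftrightarrow> wf_inst I"
  unfolding wf_code_def wf_inst_def
  by (simp add: length_code_enc_inst nth_code_enc_inst all_set_conv_all_nth del: list_encode.simps)

lemma wf_code_iff: "wf_code x \<longleftrightarrow> (\<exists>I. x = enc_inst I \<and> wf_inst I)"
  by (metis enc_decode_inst wf_code_def wf_code_enc_inst)

definition extended_entry_code :: "gadget \<Rightarrow> nat \<Rightarrow> nat \<Rightarrow> nat \<Rightarrow> nat \<Rightarrow> nat" where
  "extended_entry_code G a r c x =
    (if a < length_code (nth_code 1 x) \<and> r < nth_code 0 x \<and> c < nth_code 0 x
     then nth_code c (nth_code r (nth_code a (nth_code 1 x)))
     else if (a, r, c) \<in> G (length_code (nth_code 1 x)) (nth_code 0 x) (nth_code 3 x) (nth_code 4 x)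
     then prod_encode (1, 1) else prod_encode (0, 1))"

definition extend_code :: "gadget \<Rightarrow> nat \<Rightarrow> nat" where
  "extend_code G x = list_encode [Suc (Suc (nth_code 0 x)),
     list_encode (map (\<lambda>a. list_encode (map (\<lambda>r. list_encode (map (\<lambda>c. extended_entry_code G a r c x)
       [0..<Suc (Suc (nth_code 0 x))])) [0..<Suc (Suc (nth_code 0 x))]))
       [0..<Suc (Suc (length_code (nth_code 1 x)))]),
     nth_code 2 x, nth_code 0 x, Suc (nth_code 0 x)]"

definition reduction_code :: "gadget \<Rightarrow> nat \<Rightarrow> nat \<Rightarrow> nat" where
  "reduction_code G fallback x = (if wf_code x then extend_code G x else fallback)"

lemma extended_entry_code_enc_inst:
  assumes "wf_inst I"
  shows "extended_entry_code G a r c (enc_inst I) = prod_encode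
    (if a < length (mats I) \<and> r < nstates I \<and> c < nstates I then mats I ! a ! r ! c
     else if c \<in> gadget_succ G I a r then (1, 1) else (0, 1))"
proof (cases "a < length (mats I) \<and> r < nstates I \<and> c < nstates I")
  case True
  with wf_inst_mats[OF assms, of a r c] show ?thesis
    by (simp add: extended_entry_code_def nth_code_enc_inst del: list_encode.simps)
qed (auto simp: extended_entry_code_def gadget_succ_def nth_code_enc_inst simp del: list_encode.simps)

lemma extend_code_enc_inst:
  assumes "wf_inst I"
  shows "extend_code G (enc_inst I) = enc_inst (extend_inst G I)"
  unfolding extend_code_def
  by (simp add: nth_code_enc_inst extended_entry_code_enc_inst[OF assms] del: list_encode.simps)
    (simp add: enc_inst_def extend_inst_def comp_def del: list_encode.simps)

definition decidable_gadget :: "gadget \<Rightarrow> bool" where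
  "decidable_gadget G \<longleftrightarrow>
    rec_decidable 7 (\<lambda>ys. (ys ! 4, ys ! 5, ys ! 6) \<in> G (ys ! 0) (ys ! 1) (ys ! 2) (ys ! 3))"

lemma rec_decidable_gadget:
  assumes "decidable_gadget G"
    and "rec_computable k L" "rec_computable k n" "rec_computable k s" "rec_computable k t"
    and "rec_computable k a" "rec_computable k r" "rec_computable k c"
  shows "rec_decidable k (\<lambda>xs. (a xs, r xs, c xs) \<in> G (L xs) (n xs) (s xs) (t xs))"
  using rec_decidable_comp[OF assms(1)[unfolded decidable_gadget_def], of "[L, n, s, t, a, r, c]"]
    assms(2-)
  by simp

lemma computable_reduction_code:
  assumes "decidable_gadget G"
  shows "computable (reduction_code G fallback)"
proof (rule computable_if_rec_computable)
  show "rec_computable (Suc 0) (\<lambda>xs. reduction_code G fallback (xs ! 0))"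
    unfolding reduction_code_def extend_code_def extended_entry_code_def wf_code_def
    by (intro rec_computable_intros rec_decidable_gadget[OF assms]) simp_all
qed

lemma many_one_reduces_by_gadget:
  assumes "decidable_gadget G"
    and preserves: "\<And>I. wf_inst I \<Longrightarrow> Q' (extend_inst G I) \<longleftrightarrow> Q I"
    and "wf_inst I\<^sub>0" "\<not> Q' I\<^sub>0"
  shows "many_one_reduces {enc_inst I | I. wf_inst I \<and> Q I} {enc_inst I | I. wf_inst I \<and> Q' I}"
proof -
  have "x \<in> {enc_inst I | I. wf_inst I \<and> Q I} \<longleftrightarrow>
      reduction_code G (enc_inst I\<^sub>0) x \<in> {enc_inst I | I. wf_inst I \<and> Q' I}" for x
  proof (cases "wf_code x")
    case True
    then obtain I where x: "x = enc_inst I" and I: "wf_inst I" by (auto simp: wf_code_iff)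
    then have "reduction_code G (enc_inst I\<^sub>0) x = enc_inst (extend_inst G I)"
      by (simp add: reduction_code_def wf_code_enc_inst extend_code_enc_inst)
    with x I show ?thesis by (auto simp: enc_inst_inject preserves wf_extend_inst)
  next
    case False
    then show ?thesis using assms(3,4) by (auto simp: reduction_code_def wf_code_iff enc_inst_inject)
  qed
  with computable_reduction_code[OF assms(1)] show ?thesis
    unfolding many_one_reduces_def by blast
qed

section \<open>The two gadgets\<close>

definition O_to_Theta_gadget :: gadget where
  "O_to_Theta_gadget L n s t = {(L, n, s), (L, n, t), (L, Suc n, t)}"

definition Theta_to_O_gadget :: gadget where
  "Theta_to_O_gadget L n s t = {(L, n, s), (L, Suc n, t), (Suc L, n, t), (Suc L, Suc n, s)}"

lemma decidable_O_to_Theta_gadget: "decidable_gadget O_to_Theta_gadget"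
  unfolding decidable_gadget_def O_to_Theta_gadget_def
  by (simp only: insert_iff empty_iff prod.inject simp_thms)
    (intro rec_computable_intros; simp)

lemma decidable_Theta_to_O_gadget: "decidable_gadget Theta_to_O_gadget"
  unfolding decidable_gadget_def Theta_to_O_gadget_def
  by (simp only: insert_iff empty_iff prod.inject simp_thms)
    (intro rec_computable_intros; simp)

lemma gadget_fits_O_to_Theta: "wf_inst I \<Longrightarrow> gadget_fits O_to_Theta_gadget I"
  by (auto simp: gadget_fits_def gadget_succ_def O_to_Theta_gadget_def wf_inst_def)

lemma gadget_fits_Theta_to_O: "wf_inst I \<Longrightarrow> gadget_fits Theta_to_O_gadget I"
  by (auto simp: gadget_fits_def gadget_succ_def Theta_to_O_gadget_def wf_inst_def)

lemma gadget_weight_O_to_Theta: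
  "gadget_weight O_to_Theta_gadget I a (nstates I) w =
    (if a = length (mats I) then \<Sum>q\<in>{st1 I, st2 I}. of_rat (weight I q w) else 0)"
  "gadget_weight O_to_Theta_gadget I a (Suc (nstates I)) w =
    (if a = length (mats I) then of_rat (weight I (st2 I) w) else 0)"
  by (simp_all add: gadget_weight_def gadget_succ_def O_to_Theta_gadget_def Collect_disj_eq insert_commute)

lemma gadget_weight_Theta_to_O:
  "gadget_weight Theta_to_O_gadget I a (nstates I) w =
    (if a = length (mats I) then of_rat (weight I (st1 I) w)
     else if a = Suc (length (mats I)) then of_rat (weight I (st2 I) w) else 0)"
  "gadget_weight Theta_to_O_gadget I a (Suc (nstates I)) w =
    (if a = length (mats I) then of_rat (weight I (st2 I) w)
     else if a = Suc (length (mats I)) then of_rat (weight I (st1 I) w) else 0)"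
  by (simp_all add: gadget_weight_def gadget_succ_def Theta_to_O_gadget_def)

lemma gadget_weight_big_O_O_to_Theta_back:
  "gadget_weight_big_O O_to_Theta_gadget I (Suc (nstates I)) (nstates I)"
  unfolding gadget_weight_big_O_def
  by (intro exI[of _ 1]) (simp add: gadget_weight_O_to_Theta of_rat_weight_le_sum)

lemma gadget_weight_big_O_O_to_Theta_iff:
  "gadget_weight_big_O O_to_Theta_gadget I (nstates I) (Suc (nstates I)) \<longleftrightarrow>
    big_O I (st1 I) (st2 I)"
proof -
  let ?s = "st1 I" and ?t = "st2 I" and ?\<nu> = "\<lambda>q w. of_rat (weight I q w) :: real"
  show ?thesis
  proof
    assume "gadget_weight_big_O O_to_Theta_gadget I (nstates I) (Suc (nstates I))"
    then obtain C where C: "C > 0" and bound: "\<And>a w. is_word I w \<Longrightarrow>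
        gadget_weight O_to_Theta_gadget I a (nstates I) w
        \<le> C * gadget_weight O_to_Theta_gadget I a (Suc (nstates I)) w"
      unfolding gadget_weight_big_O_def by blast
    have "?\<nu> ?s w \<le> C * ?\<nu> ?t w" if "is_word I w" for w
    proof -
      have "?\<nu> ?s w \<le> (\<Sum>q\<in>{?s, ?t}. ?\<nu> q w)" by (simp add: of_rat_weight_le_sum)
      also have "\<dots> \<le> C * ?\<nu> ?t w"
        using bound[OF that, of "length (mats I)"] by (simp add: gadget_weight_O_to_Theta)
      finally show ?thesis .
    qed
    with C show "big_O I ?s ?t" unfolding big_O_def by blast
  next
    assume "big_O I ?s ?t"
    then obtain C :: real where C: "C > 0" and bound: "\<And>w. is_word I w \<Longrightarrow> ?\<nu> ?s w \<le> C * ?\<nu> ?t w"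
      unfolding big_O_def by blast
    have "gadget_weight O_to_Theta_gadget I a (nstates I) w
        \<le> (C + 1) * gadget_weight O_to_Theta_gadget I a (Suc (nstates I)) w"
      if "is_word I w" for a w
    proof -
      have "(\<Sum>q\<in>{?s, ?t}. ?\<nu> q w) \<le> ?\<nu> ?s w + ?\<nu> ?t w"
        by (cases "?s = ?t") (simp_all add: weight_nonneg)
      also have "\<dots> \<le> (C + 1) * ?\<nu> ?t w" using bound[OF that] by (simp add: algebra_simps)
      finally show ?thesis by (simp add: gadget_weight_O_to_Theta)
    qed
    with C show "gadget_weight_big_O O_to_Theta_gadget I (nstates I) (Suc (nstates I))"
      unfolding gadget_weight_big_O_def by (intro exI[of _ "C + 1"]) auto
  qed
qed

lemma gadget_weight_big_O_Theta_to_O_iff: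
  "gadget_weight_big_O Theta_to_O_gadget I (nstates I) (Suc (nstates I)) \<longleftrightarrow>
    big_Theta I (st1 I) (st2 I)"
proof -
  let ?s = "st1 I" and ?t = "st2 I" and ?\<nu> = "\<lambda>q w. of_rat (weight I q w) :: real"
  show ?thesis
  proof
    assume "gadget_weight_big_O Theta_to_O_gadget I (nstates I) (Suc (nstates I))"
    then obtain C where "C > 0" and bound: "\<And>a w. is_word I w \<Longrightarrow>
        gadget_weight Theta_to_O_gadget I a (nstates I) w
        \<le> C * gadget_weight Theta_to_O_gadget I a (Suc (nstates I)) w"
      unfolding gadget_weight_big_O_def by blast
    moreover have "?\<nu> ?s w \<le> C * ?\<nu> ?t w" "?\<nu> ?t w \<le> C * ?\<nu> ?s w" if "is_word I w" for w
      using bound[OF that, of "length (mats I)"] bound[OF that, of "Suc (length (mats I))"]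
      by (simp_all add: gadget_weight_Theta_to_O)
    ultimately show "big_Theta I ?s ?t" unfolding big_Theta_def big_O_def by blast
  next
    assume "big_Theta I ?s ?t"
    then obtain C\<^sub>1 C\<^sub>2 :: real where "C\<^sub>1 > 0" "C\<^sub>2 > 0"
      and bound\<^sub>1: "\<And>w. is_word I w \<Longrightarrow> ?\<nu> ?s w \<le> C\<^sub>1 * ?\<nu> ?t w"
      and bound\<^sub>2: "\<And>w. is_word I w \<Longrightarrow> ?\<nu> ?t w \<le> C\<^sub>2 * ?\<nu> ?s w"
      unfolding big_Theta_def big_O_def by blast
    moreover have "gadget_weight Theta_to_O_gadget I a (nstates I) w
        \<le> max C\<^sub>1 C\<^sub>2 * gadget_weight Theta_to_O_gadget I a (Suc (nstates I)) w"
      if "is_word I w" for a w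
      using order_trans[OF bound\<^sub>1[OF that] mult_right_mono[OF max.cobounded1]]
        order_trans[OF bound\<^sub>2[OF that] mult_right_mono[OF max.cobounded2]]
      by (simp add: gadget_weight_Theta_to_O weight_nonneg)
    ultimately show "gadget_weight_big_O Theta_to_O_gadget I (nstates I) (Suc (nstates I))"
      unfolding gadget_weight_big_O_def by (intro exI[of _ "max C\<^sub>1 C\<^sub>2"]) auto
  qed
qed

lemma big_Theta_extend_O_to_Theta_iff:
  assumes "wf_inst I"
  shows "big_Theta (extend_inst O_to_Theta_gadget I) (nstates I) (Suc (nstates I)) \<longleftrightarrow>
    big_O I (st1 I) (st2 I)"
  using big_O_extend_inst_iff[OF assms gadget_fits_O_to_Theta[OF assms]]
    gadget_weight_big_O_O_to_Theta_back gadget_weight_big_O_O_to_Theta_iff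
  by (simp add: big_Theta_def)

lemma big_O_extend_Theta_to_O_iff:
  assumes "wf_inst I"
  shows "big_O (extend_inst Theta_to_O_gadget I) (nstates I) (Suc (nstates I)) \<longleftrightarrow>
    big_Theta I (st1 I) (st2 I)"
  using big_O_extend_inst_iff[OF assms gadget_fits_Theta_to_O[OF assms]]
    gadget_weight_big_O_Theta_to_O_iff
  by simp

definition negative_inst :: inst where
  "negative_inst = \<lparr>nstates = 2, mats = [], finals = [0], st1 = 0, st2 = 1\<rparr>"

lemma wf_negative_inst: "wf_inst negative_inst"
  by (simp add: negative_inst_def wf_inst_def)

lemma not_big_O_negative_inst: "\<not> big_O negative_inst (st1 negative_inst) (st2 negative_inst)"
proof
  assume "big_O negative_inst (st1 negative_inst) (st2 negative_inst)"
  moreover have "is_word negative_inst []" by (simp add: is_word_def)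
  ultimately show False by (auto simp: big_O_def negative_inst_def)
qed

theorem lemma3p3:
  shows "many_one_reduces BigO_problem BigTheta_problem \<and> many_one_reduces BigTheta_problem BigO_problem"
proof
  show "many_one_reduces BigO_problem BigTheta_problem"
    unfolding BigO_problem_def BigTheta_problem_def
    using big_Theta_extend_O_to_Theta_iff not_big_O_negative_inst
    by (intro many_one_reduces_by_gadget[OF decidable_O_to_Theta_gadget _ wf_negative_inst])
      (auto simp: big_Theta_def)
  show "many_one_reduces BigTheta_problem BigO_problem"
    unfolding BigO_problem_def BigTheta_problem_def
    using big_O_extend_Theta_to_O_iff not_big_O_negative_inst
    by (intro many_one_reduces_by_gadget[OF decidable_Theta_to_O_gadget _ wf_negative_inst])
      (auto simp: big_Theta_def)
qed

end
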